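(* Let $\gamma=(\gamma_1,\gamma_2,\gamma_3):[a,b]\to\mathbb G$ be a Euclidean $C^2$-smooth regular curve and $t\in[a,b]$. Write $\omega(\dot\gamma(t))=\frac{\dot\gamma_2}{\gamma_1}-\dot\gamma_3$. (i) If $\omega(\dot\gamma(t))\ne0$, then $k^\infty_\gamma=\lim_{L\to+\infty}k^L_\gamma$ exists at $t$ and $$k^\infty_\gamma=\frac{\sqrt{\dot\gamma_1^2+\dot\gamma_2^2}}{|\gamma_1|\,|\omega(\dot\gamma(t))|}.$$ (ii) If $\omega(\dot\gamma(t))=0$ and $\frac{d}{dt}\omega(\dot\gamma(t))=0$, then the limit exists and, with $S=\big(\frac{\dot\gamma_1}{\gamma_1}\big)^2+\dot\gamma_3^2$, $$k^\infty_\gamma=\left\{\left[\Big(\frac{\ddot\gamma_1\gamma_1-\dot\gamma_1^2}{\gamma_1^2}\Big)^2+\ddot\gamma_3^2\right]S^{-2}-\left[\frac{\ddot\gamma_1\dot\gamma_1\gamma_1-\dot\gamma_1^3}{\gamma_1^3}+\dot\gamma_3\ddot\gamma_3\right]^2S^{-3}\right\}^{1/2}.$$ (iii) If $\omega(\dot\gamma(t))=0$ and $\frac{d}{dt}\omega(\dot\gamma(t))\ne0$, then $$\lim_{L\to+\infty}\frac{k^L_\gamma}{\sqrt L}=\frac{\big|\frac{d}{dt}\omega(\dot\gamma(t))\big|}{\big(\frac{\dot\gamma_1}{\gamma_1}\big)^2+\dot\gamma_3^2}.$$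
   Context: $\mathbb G=(0,\infty)\times\mathbb R^2$ is the affine group with coordinates $(x_1,x_2,x_3)$ and law $(a,b,c)\star(x,y,z)=(ax,ay+b,z+c)$. Let $X_1=x_1\partial_{x_1}$, $X_2=x_1\partial_{x_2}+\partial_{x_3}$, $X_3=x_1\partial_{x_2}$ with dual forms $\omega_1=x_1^{-1}dx_1$, $\omega_2=dx_3$, $\omega=x_1^{-1}dx_2-dx_3$. For $L>0$, $g_L=\omega_1\otimes\omega_1+\omega_2\otimes\omega_2+L\,\omega\otimes\omega$ with Levi-Civita connection $\nabla^L$, inner product $\langle\cdot,\cdot\rangle_L$ and norm $\|\cdot\|_L$. A curve is regular if $\dot\gamma\neq0$ everywhere. The curvature of $\gamma$ at $\gamma(t)$ is $$k^L_\gamma=\sqrt{\frac{\|\nabla^L_{\dot\gamma}\dot\gamma\|_L^2}{\|\dot\gamma\|_L^4}-\frac{\langle\nabla^L_{\dot\gamma}\dot\gamma,\dot\gamma\rangle_L^2}{\|\dot\gamma\|_L^6}},$$ and $k^\infty_\gamma:=\lim_{L\to+\infty}k^L_\gamma$ when it exists. *)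

theory Defs
  imports "HOL-Analysis.Analysis"
begin

text \<open>Points of the affine group G = (0,oo) x R^2 are vectors x :: real^3 with x$1 > 0;
  coordinates (x1,x2,x3) = (x$1, x$2, x$3). Tangent vectors are also real^3
  (components w.r.t. the coordinate vector fields d/dx1, d/dx2, d/dx3).\<close>

definition in_G :: "real^3 \<Rightarrow> bool" where
  "in_G x \<longleftrightarrow> x$1 > 0"

definition om1 :: "real^3 \<Rightarrow> real^3 \<Rightarrow> real" where
  "om1 x v = v$1 / x$1"
definition om2 :: "real^3 \<Rightarrow> real^3 \<Rightarrow> real" where
  "om2 x v = v$3"
definition om :: "real^3 \<Rightarrow> real^3 \<Rightarrow> real" where
  "om x v = v$2 / x$1 - v$3"

definition gL :: "real \<Rightarrow> real^3 \<Rightarrow> real^3 \<Rightarrow> real^3 \<Rightarrow> real" where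
  "gL L x v w = om1 x v * om1 x w + om2 x v * om2 x w + L * (om x v * om x w)"

definition normL :: "real \<Rightarrow> real^3 \<Rightarrow> real^3 \<Rightarrow> real" where
  "normL L x v = sqrt (gL L x v v)"

definition gmat :: "real \<Rightarrow> real^3 \<Rightarrow> real^3^3" where
  "gmat L x = (\<chi> i j. gL L x (axis i 1) (axis j 1))"

definition ginv :: "real \<Rightarrow> real^3 \<Rightarrow> real^3^3" where
  "ginv L x = matrix_inv (gmat L x)"

definition pderiv :: "3 \<Rightarrow> (real^3 \<Rightarrow> real) \<Rightarrow> real^3 \<Rightarrow> real" where
  "pderiv i f x = deriv (\<lambda>s. f (x + s *\<^sub>R axis i 1)) 0"

definition christoffel :: "real \<Rightarrow> 3 \<Rightarrow> 3 \<Rightarrow> 3 \<Rightarrow> real^3 \<Rightarrow> real" where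
  "christoffel L k i j x =
     (1/2) * (\<Sum>l\<in>UNIV. ginv L x $ k $ l *
        (pderiv i (\<lambda>y. gmat L y $ j $ l) x + pderiv j (\<lambda>y. gmat L y $ i $ l) x
         - pderiv l (\<lambda>y. gmat L y $ i $ j) x))"

definition cov_acc :: "real \<Rightarrow> real^3 \<Rightarrow> real^3 \<Rightarrow> real^3 \<Rightarrow> real^3" where
  "cov_acc L p v acc = (\<chi> k. acc $ k + (\<Sum>i\<in>UNIV. \<Sum>j\<in>UNIV. christoffel L k i j p * v $ i * v $ j))"

definition vel :: "(real \<Rightarrow> real^3) \<Rightarrow> real \<Rightarrow> real \<Rightarrow> real \<Rightarrow> real^3" where
  "vel \<gamma> a b t = vector_derivative \<gamma> (at t within {a..b})"

definition accel :: "(real \<Rightarrow> real^3) \<Rightarrow> real \<Rightarrow> real \<Rightarrow> real \<Rightarrow> real^3" where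
  "accel \<gamma> a b t = vector_derivative (vel \<gamma> a b) (at t within {a..b})"

definition curvL :: "real \<Rightarrow> (real \<Rightarrow> real^3) \<Rightarrow> real \<Rightarrow> real \<Rightarrow> real \<Rightarrow> real" where
  "curvL L \<gamma> a b t =
    (let p = \<gamma> t; v = vel \<gamma> a b t; N = cov_acc L p v (accel \<gamma> a b t) in
      sqrt (normL L p N ^ 2 / normL L p v ^ 4 - (gL L p N v)^2 / normL L p v ^ 6))"

end

theory Submission
  imports Defs
begin

text \<open>In the left-invariant coframe (omega_1, omega_2, omega) the metric g_L is diagonal
  with weights 1, 1, L, so (k^L)^2 is a rational function of L and of the coframe components
  of gamma' and of the covariant acceleration. The Christoffel symbols show that the latter
  are A + L u_1, B + L u_2 and C, with (u_1, u_2) = omega(gamma') (gamma'_2, -gamma'_1) / gamma_1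
  and C = (d/dt) omega(gamma') - gamma'_1 omega(gamma') / gamma_1. If omega(gamma') is nonzero,
  (k^L)^2 tends to (u_1^2 + u_2^2) / omega(gamma')^4. If omega(gamma') = 0, the u_i vanish and
  (k^L)^2 = K + L ((d/dt) omega(gamma'))^2 / S^2 with K independent of L and
  S = (gamma'_1 / gamma_1)^2 + gamma'_3^2.\<close>

lemma tendsto_sqrt_affine_div_sqrt:
  "((\<lambda>L. sqrt (k + L * c) / sqrt L) \<longlongrightarrow> sqrt c) at_top"
proof -
  have "((\<lambda>L. sqrt (k / L + c)) \<longlongrightarrow> sqrt (0 + c)) at_top"
    by (intro tendsto_intros tendsto_divide_0[OF tendsto_const]
        filterlim_at_top_imp_at_infinity[OF filterlim_ident])
  moreover have "\<forall>\<^sub>F L in at_top. sqrt (k / L + c) = sqrt (k + L * c) / sqrt L"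
    using eventually_gt_at_top[of 0]
    by eventually_elim (simp add: field_simps flip: real_sqrt_divide)
  ultimately show ?thesis
    using Lim_transform_eventually by fastforce
qed

definition frame_curv_sq :: "real \<Rightarrow> real \<Rightarrow> real \<Rightarrow> real \<Rightarrow> real \<Rightarrow> real \<Rightarrow> real \<Rightarrow> real" where
  "frame_curv_sq L n1 n2 n3 c1 c2 w =
    (let Q = c1^2 + c2^2 + L * w^2 in
      (n1^2 + n2^2 + L * n3^2) / Q^2 - (n1 * c1 + n2 * c2 + L * n3 * w)^2 / Q^3)"

lemma curvature_quotient_eq_frame_curv_sq:
  assumes "L \<ge> 0"
  shows "normL L p N ^ 2 / normL L p v ^ 4 - (gL L p N v)^2 / normL L p v ^ 6 =
    frame_curv_sq L (om1 p N) (om2 p N) (om p N) (om1 p v) (om2 p v) (om p v)"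
proof -
  have nonneg: "gL L p u u \<ge> 0" for u
    using assms by (simp add: gL_def)
  have pow: "y ^ 4 = (y^2)^2" "y ^ 6 = (y^2)^3" for y :: real
    by (simp_all flip: power_mult)
  have "normL L p u ^ 2 = gL L p u u" "normL L p u ^ 4 = (gL L p u u)^2"
    "normL L p u ^ 6 = (gL L p u u)^3" for u
    using nonneg[of u] unfolding pow by (simp_all add: normL_def)
  then show ?thesis
    by (simp add: frame_curv_sq_def Let_def gL_def power2_eq_square mult.assoc)
qed

text \<open>Dividing numerator and denominator by powers of L turns the limit L \<rightarrow> \<infinity>
  into continuity at e = 0.\<close>

lemma frame_curv_sq_rescale:
  assumes "L > 0"
  defines "e \<equiv> inverse L"
  shows "frame_curv_sq L (A + L * u1) (B + L * u2) C c1 c2 w =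
    ((A * e + u1)^2 + (B * e + u2)^2 + e * C^2) / (c1^2 * e + c2^2 * e + w^2)^2
    - e * ((A * e + u1) * c1 + (B * e + u2) * c2 + C * w)^2 / (c1^2 * e + c2^2 * e + w^2)^3"
proof -
  have Le: "L * e = 1"
    using assms by (simp add: e_def)
  have n: "A + L * u1 = L * (A * e + u1)" "B + L * u2 = L * (B * e + u2)"
    using Le by (simp_all add: algebra_simps)
  have Q: "c1^2 + c2^2 + L * w^2 = L * (c1^2 * e + c2^2 * e + w^2)"
  proof -
    have "L * (c1^2 * e + c2^2 * e + w^2) = (L * e) * c1^2 + (L * e) * c2^2 + L * w^2"
      by (simp add: algebra_simps)
    then show ?thesis using Le by simp
  qed
  have num: "(L * X)^2 + (L * Y)^2 + L * C^2 = L^2 * (X^2 + Y^2 + e * C^2)" for X Y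
    using Le by (simp add: algebra_simps power2_eq_square)
  have inner: "L * X * c1 + L * Y * c2 + L * C * w = L * (X * c1 + Y * c2 + C * w)" for X Y
    by (simp add: algebra_simps)
  have cancel2: "L^2 * P / (L * R)^2 = P / R^2" for P R
    using assms by (simp add: power_mult_distrib)
  have cancel3: "(L * Z)^2 / (L * R)^3 = e * Z^2 / R^3" for Z R
    using assms by (cases "R = 0") (simp_all add: e_def field_simps power2_eq_square power3_eq_cube)
  show ?thesis
    unfolding frame_curv_sq_def Let_def n Q num inner cancel2 cancel3 ..
qed

lemma tendsto_frame_curv_sq:
  assumes "w \<noteq> 0"
  shows "((\<lambda>L. frame_curv_sq L (A + L * u1) (B + L * u2) C c1 c2 w) \<longlongrightarrow> (u1^2 + u2^2) / w^4) at_top"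
proof -
  define g where "g e = ((A * e + u1)^2 + (B * e + u2)^2 + e * C^2) / (c1^2 * e + c2^2 * e + w^2)^2
      - e * ((A * e + u1) * c1 + (B * e + u2) * c2 + C * w)^2 / (c1^2 * e + c2^2 * e + w^2)^3" for e
  have "((\<lambda>L. g (inverse L)) \<longlongrightarrow> g 0) at_top"
    unfolding g_def using assms
    by (intro tendsto_intros tendsto_inverse_0_at_top filterlim_ident) auto
  moreover have "\<forall>\<^sub>F L in at_top. g (inverse L) = frame_curv_sq L (A + L * u1) (B + L * u2) C c1 c2 w"
    using eventually_gt_at_top[of 0]
    by eventually_elim (simp add: frame_curv_sq_rescale g_def)
  moreover have "g 0 = (u1^2 + u2^2) / w^4"
    by (simp add: g_def flip: power_mult)
  ultimately show ?thesis
    using Lim_transform_eventually by fastforce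
qed

lemma frame_curv_sq_w_zero:
  "frame_curv_sq L n1 n2 n3 c1 c2 0 =
     (n1^2 + n2^2) / (c1^2 + c2^2)^2 - (n1 * c1 + n2 * c2)^2 / (c1^2 + c2^2)^3
     + L * n3^2 / (c1^2 + c2^2)^2"
  by (simp add: frame_curv_sq_def Let_def add_divide_distrib)

definition gcoef :: "real \<Rightarrow> real \<Rightarrow> 3 \<Rightarrow> 3 \<Rightarrow> real" where
  "gcoef L r i j =
    (if i = 1 \<and> j = 1 then 1 / r^2
     else if i = 2 \<and> j = 2 then L / r^2
     else if (i = 2 \<and> j = 3) \<or> (i = 3 \<and> j = 2) then - L / r
     else if i = 3 \<and> j = 3 then 1 + L else 0)"

definition gcoef_deriv :: "real \<Rightarrow> real \<Rightarrow> 3 \<Rightarrow> 3 \<Rightarrow> real" where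
  "gcoef_deriv L r i j =
    (if i = 1 \<and> j = 1 then - 2 / r^3
     else if i = 2 \<and> j = 2 then - 2 * L / r^3
     else if (i = 2 \<and> j = 3) \<or> (i = 3 \<and> j = 2) then L / r^2 else 0)"

definition gcoef_inv :: "real \<Rightarrow> real \<Rightarrow> real^3^3" where
  "gcoef_inv L r =
    (\<chi> i j. if i = 1 \<and> j = 1 then r^2
     else if i = 2 \<and> j = 2 then r^2 * (1 + L) / L
     else if (i = 2 \<and> j = 3) \<or> (i = 3 \<and> j = 2) then r
     else if i = 3 \<and> j = 3 then 1 else 0)"

lemma gmat_eq_gcoef: "gmat L y $ i $ j = gcoef L (y$1) i j"
proof -
  have "gmat L y = (\<chi> i j. gcoef L (y$1) i j)"
    unfolding vec_eq_iff forall_3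
    by (simp add: gmat_def gL_def om1_def om2_def om_def axis_def power2_eq_square gcoef_def)
  then show ?thesis by simp
qed

lemma has_real_derivative_gcoef:
  assumes "r > 0"
  shows "((\<lambda>r. gcoef L r i j) has_real_derivative gcoef_deriv L r i j) (at r)"
  using exhaust_3[of i] exhaust_3[of j] assms
  by (elim disjE)
     (auto simp: gcoef_def gcoef_deriv_def field_simps power2_eq_square power3_eq_cube
       intro!: derivative_eq_intros)

lemma pderiv_fun_of_first_coord:
  assumes "\<And>y. f y = h (y$1)"
  shows "pderiv i f x = (if i = 1 then deriv h (x$1) else 0)"
proof (cases "i = 1")
  case True
  then have "(\<lambda>s. f (x + s *\<^sub>R axis i 1)) = (\<lambda>s. h (s + x$1))"
    by (simp add: assms axis_def add.commute)
  moreover have "deriv (\<lambda>s. h (s + x$1)) 0 = deriv h (x$1)"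
    unfolding deriv_def using DERIV_shift[of h _ 0 "x$1"] by simp
  ultimately show ?thesis
    using True by (simp add: pderiv_def)
next
  case False
  then have "(\<lambda>s. f (x + s *\<^sub>R axis i 1)) = (\<lambda>s. h (x$1))"
    by (simp add: assms axis_def)
  then show ?thesis
    using False by (simp add: pderiv_def)
qed

lemma pderiv_gmat:
  assumes "x$1 > 0"
  shows "pderiv i (\<lambda>y. gmat L y $ j $ l) x = (if i = 1 then gcoef_deriv L (x$1) j l else 0)"
  using pderiv_fun_of_first_coord[of "\<lambda>y. gmat L y $ j $ l" "\<lambda>r. gcoef L r j l", OF gmat_eq_gcoef]
    DERIV_imp_deriv[OF has_real_derivative_gcoef[OF assms]]
  by simp

lemma ginv_eq_gcoef_inv:
  assumes "x$1 > 0" "L > 0"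
  shows "ginv L x = gcoef_inv L (x$1)"
proof -
  have nz: "x$1 \<noteq> 0" "L \<noteq> 0"
    using assms by auto
  have g: "gmat L x = (\<chi> i j. gcoef L (x$1) i j)"
    by (simp add: vec_eq_iff gmat_eq_gcoef)
  have right: "gmat L x ** gcoef_inv L (x$1) = mat 1"
   and left: "gcoef_inv L (x$1) ** gmat L x = mat 1"
    unfolding g vec_eq_iff forall_3 matrix_matrix_mult_def mat_def
    by (simp_all add: sum_3 gcoef_def gcoef_inv_def nz field_simps power2_eq_square)
  have "B = gcoef_inv L (x$1)" if "gmat L x ** B = mat 1 \<and> B ** gmat L x = mat 1" for B
    using that right by (metis matrix_mul_assoc matrix_mul_lid matrix_mul_rid)
  then show ?thesis
    unfolding ginv_def matrix_inv_def using left right by (metis (mono_tags, lifting) someI)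
qed

lemma cov_acc_components:
  assumes "p$1 > 0" "L > 0"
  shows "cov_acc L p v acc $ 1 = acc$1 - (v$1)^2 / p$1 + L / p$1 * (v$2)^2 - L * v$2 * v$3"
    and "cov_acc L p v acc $ 2 = acc$2 - (2 + L) / p$1 * v$1 * v$2 + (1 + L) * v$1 * v$3"
    and "cov_acc L p v acc $ 3 = acc$3 - L / (p$1)^2 * v$1 * v$2 + L / p$1 * v$1 * v$3"
  using assms
  unfolding cov_acc_def christoffel_def ginv_eq_gcoef_inv[OF assms] pderiv_gmat[OF assms(1)]
  by (simp_all add: sum_3 gcoef_inv_def gcoef_deriv_def field_simps power2_eq_square power3_eq_cube)

definition om_deriv :: "real^3 \<Rightarrow> real^3 \<Rightarrow> real^3 \<Rightarrow> real" where
  "om_deriv p v acc = (acc$2 * p$1 - v$1 * v$2) / (p$1)^2 - acc$3"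

lemma frame_components_cov_acc:
  assumes "p$1 > 0" "L > 0"
  shows "om1 p (cov_acc L p v acc) = acc$1 / p$1 - (v$1 / p$1)^2 + L * (v$2 * om p v / p$1)"
    and "om2 p (cov_acc L p v acc) = acc$3 + L * (- v$1 * om p v / p$1)"
    and "om p (cov_acc L p v acc) = om_deriv p v acc - v$1 * om p v / p$1"
  using assms
  unfolding om1_def om2_def om_def om_deriv_def cov_acc_components[OF assms]
  by (simp_all add: field_simps power2_eq_square)

definition curv_at :: "real \<Rightarrow> real^3 \<Rightarrow> real^3 \<Rightarrow> real^3 \<Rightarrow> real" where
  "curv_at L p v acc =
    (let N = cov_acc L p v acc in
      sqrt (normL L p N ^ 2 / normL L p v ^ 4 - (gL L p N v)^2 / normL L p v ^ 6))"

lemma curvL_eq_curv_at: "curvL L \<gamma> a b t = curv_at L (\<gamma> t) (vel \<gamma> a b t) (accel \<gamma> a b t)"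
  by (simp add: curvL_def curv_at_def Let_def)

lemma curv_at_eq_frame_curv_sq:
  assumes "p$1 > 0" "L > 0"
  shows "curv_at L p v acc =
    sqrt (frame_curv_sq L (acc$1 / p$1 - (v$1 / p$1)^2 + L * (v$2 * om p v / p$1))
      (acc$3 + L * (- v$1 * om p v / p$1)) (om_deriv p v acc - v$1 * om p v / p$1)
      (v$1 / p$1) (v$3) (om p v))"
  using assms
  unfolding curv_at_def Let_def curvature_quotient_eq_frame_curv_sq[OF less_imp_le[OF assms(2)]]
    frame_components_cov_acc[OF assms]
  by (simp add: om1_def om2_def)

lemma tendsto_curv_at_om_nonzero:
  assumes "p$1 > 0" "om p v \<noteq> 0"
  shows "((\<lambda>L. curv_at L p v acc) \<longlongrightarrow> sqrt ((v$1)^2 + (v$2)^2) / (\<bar>p$1\<bar> * \<bar>om p v\<bar>)) at_top"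
proof -
  let ?u1 = "v$2 * om p v / p$1" and ?u2 = "- v$1 * om p v / p$1"
  have "((\<lambda>L. sqrt (frame_curv_sq L (acc$1 / p$1 - (v$1 / p$1)^2 + L * ?u1) (acc$3 + L * ?u2)
      (om_deriv p v acc - v$1 * om p v / p$1) (v$1 / p$1) (v$3) (om p v)))
      \<longlongrightarrow> sqrt ((?u1^2 + ?u2^2) / (om p v)^4)) at_top"
    using assms(2) by (intro tendsto_real_sqrt tendsto_frame_curv_sq)
  moreover have "\<forall>\<^sub>F L in at_top. sqrt (frame_curv_sq L (acc$1 / p$1 - (v$1 / p$1)^2 + L * ?u1)
      (acc$3 + L * ?u2) (om_deriv p v acc - v$1 * om p v / p$1) (v$1 / p$1) (v$3) (om p v))
      = curv_at L p v acc"
    using eventually_gt_at_top[of 0]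
    by eventually_elim (simp add: curv_at_eq_frame_curv_sq assms(1))
  moreover have "(?u1^2 + ?u2^2) / (om p v)^4 = ((v$1)^2 + (v$2)^2) / (p$1 * om p v)^2"
    using assms by (simp add: field_simps power2_eq_square power4_eq_xxxx)
  ultimately show ?thesis
    using Lim_transform_eventually by (fastforce simp: real_sqrt_divide abs_mult)
qed

lemma curv_at_om_zero:
  assumes "p$1 > 0" "om p v = 0" "L > 0"
  defines "S \<equiv> (v$1 / p$1)^2 + (v$3)^2"
  shows "curv_at L p v acc =
    sqrt ((((acc$1 * p$1 - (v$1)^2) / (p$1)^2)^2 + (acc$3)^2) * S powi (-2)
      - ((acc$1 * v$1 * p$1 - (v$1)^3) / (p$1)^3 + v$3 * acc$3)^2 * S powi (-3)
      + L * (om_deriv p v acc)^2 / S^2)"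
proof -
  have "acc$1 / p$1 - (v$1 / p$1)^2 = (acc$1 * p$1 - (v$1)^2) / (p$1)^2"
    "(acc$1 / p$1 - (v$1 / p$1)^2) * (v$1 / p$1) + acc$3 * v$3
      = (acc$1 * v$1 * p$1 - (v$1)^3) / (p$1)^3 + v$3 * acc$3"
    using assms(1) by (simp_all add: field_simps power2_eq_square power3_eq_cube)
  then show ?thesis
    using assms
    by (simp add: curv_at_eq_frame_curv_sq frame_curv_sq_w_zero power_int_minus
        divide_inverse power_mult_distrib S_def mult.commute[of "v$3" "acc$3"])
qed

lemma tendsto_curv_at_om_deriv_zero:
  assumes "p$1 > 0" "om p v = 0" "om_deriv p v acc = 0"
  shows "let g1 = p$1; d1 = v$1; d3 = v$3; dd1 = acc$1; dd3 = acc$3;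
      S = (d1 / g1)^2 + d3^2 in
    ((\<lambda>L. curv_at L p v acc) \<longlongrightarrow>
      sqrt ((((dd1 * g1 - d1^2) / g1^2)^2 + dd3^2) * S powi (-2)
        - ((dd1 * d1 * g1 - d1^3) / g1^3 + d3 * dd3)^2 * S powi (-3))) at_top"
  unfolding Let_def
  by (rule tendsto_eventually, use eventually_gt_at_top[of 0] in eventually_elim)
    (simp add: curv_at_om_zero assms)

lemma tendsto_curv_at_div_sqrt:
  assumes "p$1 > 0" "om p v = 0"
  shows "((\<lambda>L. curv_at L p v acc / sqrt L) \<longlongrightarrow>
    \<bar>om_deriv p v acc\<bar> / ((v$1 / p$1)^2 + (v$3)^2)) at_top"
proof -
  define S where "S = (v$1 / p$1)^2 + (v$3)^2"
  define k where "k = (((acc$1 * p$1 - (v$1)^2) / (p$1)^2)^2 + (acc$3)^2) * S powi (-2)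
      - ((acc$1 * v$1 * p$1 - (v$1)^3) / (p$1)^3 + v$3 * acc$3)^2 * S powi (-3)"
  have "\<forall>\<^sub>F L in at_top. sqrt (k + L * (om_deriv p v acc / S)^2) / sqrt L = curv_at L p v acc / sqrt L"
    using eventually_gt_at_top[of 0]
    by eventually_elim (simp add: curv_at_om_zero assms k_def S_def power_divide)
  moreover have "sqrt ((om_deriv p v acc / S)^2) = \<bar>om_deriv p v acc\<bar> / S"
    by (simp add: S_def abs_divide)
  ultimately show ?thesis
    using Lim_transform_eventually[OF tendsto_sqrt_affine_div_sqrt] by (fastforce simp: S_def)
qed

lemma vel_eq:
  assumes "a < b" "s \<in> {a..b}" "(\<gamma> has_vector_derivative v) (at s within {a..b})"
  shows "vel \<gamma> a b s = v"
  using vector_derivative_within_cbox[of a b s \<gamma> v] assms by (simp add: vel_def)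

lemma accel_eq:
  assumes "a < b" "t \<in> {a..b}"
    and "\<forall>s\<in>{a..b}. (\<gamma> has_vector_derivative \<gamma>' s) (at s within {a..b})"
    and "(\<gamma>' has_vector_derivative acc) (at t within {a..b})"
  shows "accel \<gamma> a b t = acc"
proof -
  have "(vel \<gamma> a b has_vector_derivative acc) (at t within {a..b})"
    using has_vector_derivative_transform[of t "{a..b}" "vel \<gamma> a b" \<gamma>'] assms vel_eq by blast
  then show ?thesis
    using vector_derivative_within_cbox[of a b t "vel \<gamma> a b" acc] assms by (simp add: accel_def)
qed

lemma has_real_derivative_om_curve:
  assumes "\<gamma> t $ 1 \<noteq> 0"
    and "(\<gamma> has_vector_derivative \<gamma>' t) (at t within S)"
    and "(\<gamma>' has_vector_derivative \<gamma>'' t) (at t within S)"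
  shows "((\<lambda>s. om (\<gamma> s) (\<gamma>' s)) has_real_derivative om_deriv (\<gamma> t) (\<gamma>' t) (\<gamma>'' t)) (at t within S)"
proof -
  have "((\<lambda>s. f s $ i) has_real_derivative f' $ i) (at t within S)"
    if "(f has_vector_derivative f') (at t within S)" for f :: "real \<Rightarrow> real^3" and f' i
    using bounded_linear.has_vector_derivative[OF bounded_linear_vec_nth that]
    by (simp add: has_real_derivative_iff_has_vector_derivative)
  from this[OF assms(2)] this[OF assms(3)] show ?thesis
    unfolding om_def om_deriv_def using assms(1)
    by (auto intro!: derivative_eq_intros simp: field_simps power2_eq_square)
qed

theorem lemma2p6:
  fixes \<gamma> \<gamma>' \<gamma>'' :: "real \<Rightarrow> real^3" and a b t :: real
  assumes ab: "a < b"
    and inG: "\<forall>s\<in>{a..b}. in_G (\<gamma> s)"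
    and d1: "\<forall>s\<in>{a..b}. (\<gamma> has_vector_derivative \<gamma>' s) (at s within {a..b})"
    and d2: "\<forall>s\<in>{a..b}. (\<gamma>' has_vector_derivative \<gamma>'' s) (at s within {a..b})"
    and c2: "continuous_on {a..b} \<gamma>''"
    and reg: "\<forall>s\<in>{a..b}. \<gamma>' s \<noteq> 0"
    and t: "t \<in> {a..b}"
  shows
   "(om (\<gamma> t) (\<gamma>' t) \<noteq> 0 \<longrightarrow>
       ((\<lambda>L. curvL L \<gamma> a b t) \<longlongrightarrow>
          sqrt ((\<gamma>' t $ 1)^2 + (\<gamma>' t $ 2)^2) / (\<bar>\<gamma> t $ 1\<bar> * \<bar>om (\<gamma> t) (\<gamma>' t)\<bar>)) at_top)
    \<and> (\<forall>w. ((\<lambda>s. om (\<gamma> s) (\<gamma>' s)) has_real_derivative w) (at t within {a..b}) \<longrightarrow>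
         om (\<gamma> t) (\<gamma>' t) = 0 \<longrightarrow> w = 0 \<longrightarrow>
         (let g1 = \<gamma> t $ 1; d1 = \<gamma>' t $ 1; d3 = \<gamma>' t $ 3;
              dd1 = \<gamma>'' t $ 1; dd3 = \<gamma>'' t $ 3;
              S = (d1 / g1)^2 + d3^2 in
          ((\<lambda>L. curvL L \<gamma> a b t) \<longlongrightarrow>
            sqrt ((((dd1 * g1 - d1^2) / g1^2)^2 + dd3^2) * S powi (-2)
                  - ((dd1 * d1 * g1 - d1^3) / g1^3 + d3 * dd3)^2 * S powi (-3))) at_top))
    \<and> (\<forall>w. ((\<lambda>s. om (\<gamma> s) (\<gamma>' s)) has_real_derivative w) (at t within {a..b}) \<longrightarrow>
         om (\<gamma> t) (\<gamma>' t) = 0 \<longrightarrow> w \<noteq> 0 \<longrightarrow>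
         ((\<lambda>L. curvL L \<gamma> a b t / sqrt L) \<longlongrightarrow>
            \<bar>w\<bar> / ((\<gamma>' t $ 1 / \<gamma> t $ 1)^2 + (\<gamma>' t $ 3)^2)) at_top)"
proof -
  have x: "\<gamma> t $ 1 > 0"
    using inG t by (simp add: in_G_def)
  have "vel \<gamma> a b t = \<gamma>' t" "accel \<gamma> a b t = \<gamma>'' t"
    using vel_eq accel_eq ab t d1 d2 by auto
  then have curv: "curvL L \<gamma> a b t = curv_at L (\<gamma> t) (\<gamma>' t) (\<gamma>'' t)" for L
    by (simp add: curvL_eq_curv_at)
  have w: "w = om_deriv (\<gamma> t) (\<gamma>' t) (\<gamma>'' t)"
    if "((\<lambda>s. om (\<gamma> s) (\<gamma>' s)) has_real_derivative w) (at t within {a..b})" for w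
    using vector_derivative_unique_within_closed_interval[of a b t, unfolded cbox_interval] ab t that
      has_real_derivative_om_curve[of \<gamma> t \<gamma>' "{a..b}" \<gamma>''] x d1 d2 t
    by (fastforce simp: has_real_derivative_iff_has_vector_derivative)
  show ?thesis
    unfolding curv
    using tendsto_curv_at_om_nonzero[OF x] tendsto_curv_at_om_deriv_zero[OF x]
      tendsto_curv_at_div_sqrt[OF x]
    by (intro conjI allI impI) (auto dest!: w simp: Let_def)
qed

end
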